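(* Let $\Sigma$ be an $(m,n)$-multirate system with operators $A_t,B_t,C_t,D_t$, let $\mathcal A:=\mathcal T_{m\overline n}(A)$, $\mathcal B:=\mathcal T_{m\overline n}(B)$, $\mathcal C:=\mathcal T_{m\overline n}(C)$, $\mathcal D:=\mathcal T_{m\overline n}(D)$, let $0\neq z\in\rho_{m\overline n}(\mathcal A)$, let the input $u$ be a $U$-valued $(n,z^{\overline m})$-EMP and put $\mathbf u:=\mathcal F_{n,z^{\overline m}}u$. \begin{enumerate} \item There is a unique initial state $x_0\in X$ such that the signals $u^\circ$, $x$, $y^\circ$ of the central system of $\Sigma$ with $x(0)=x_0$ are $(m\overline n,z)$-EMPs, and the output $y$ is an $(m,z^{\overline n})$-EMP. \item For this $x_0$, with $\mathbf u^\circ:=\mathcal F_{m\overline n,z}u^\circ$, $\mathbf x:=\mathcal F_{m\overline n,z}x$, $\mathbf y^\circ:=\mathcal F_{m\overline n,z}y^\circ$ and $\mathbf y:=\mathcal F_{m,z^{\overline n}}y$, one has \[ \mathcal N_{m\overline n}\mathbf x=z\mathcal A\mathbf x+z\mathcal B\mathbf u^\circ,\quad \mathbf y^\circ=\mathcal C\mathbf x+\mathcal D\mathbf u^\circ,\quad \mathbf u^\circ=\Pi_{n,1,\overline m}\mathbf u/\overline m,\quad \mathbf y=\Pi_{m,1,\overline n}^*\mathbf y^\circ. \tag{$\ast$} \] Conversely, if $\mathbf u\in U^n$, $\mathbf u^\circ\in U^{m\overline n}$, $\mathbf x\in X^{m\overline n}$, $\mathbf y^\circ\in Y^{m\overline n}$,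 $\mathbf y\in Y^m$ satisfy $(\ast)$, then the corresponding time-domain sequences $u=\mathcal F_{n,z^{\overline m}}^{-1}\mathbf u$, $u^\circ=\mathcal F^{-1}_{m\overline n,z}\mathbf u^\circ$, $x=\mathcal F^{-1}_{m\overline n,z}\mathbf x$, $y^\circ=\mathcal F^{-1}_{m\overline n,z}\mathbf y^\circ$, $y=\mathcal F^{-1}_{m,z^{\overline n}}\mathbf y$ satisfy the equations of $\Sigma$, and $x(0)$ equals the sum of the entries of $\mathbf x$. \item For $z\in\rho_{m\overline n}(\mathcal A)$, $\mathbf u$ uniquely determines $\mathbf u^\circ,\mathbf x,\mathbf y^\circ,\mathbf y$ in $(\ast)$; in particular the map $\mathbf u\mapsto\mathbf y$ equals \[ \mathcal G(z):=\Pi_{m,1,\overline n}^*\big(z\mathcal C(\mathcal N_{m\overline n}-z\mathcal A)^{-1}\mathcal B+\mathcal D\big)\Pi_{n,1,\overline m}/\overline m . \] \end{enumerate}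
   Context: $j$ is the imaginary unit; $U,X,Y$ are separable complex Hilbert spaces. Upsampler: $(\uparrow_q v)_t=v_{t/q}$ if $t/q\in\mathbb Z$, else $0$; downsampler: $(\downarrow_q v)_t=v_{qt}$. Multirate system: for $m,n\in\mathbb Z^+$ let $c=\gcd(m,n)$, $\overline m=m/c$, $\overline n=n/c$. An $(m,n)$-multirate system $\Sigma$ consists of $m\overline n$-periodic sequences of bounded operators $A_t:X\to X$, $B_t:U\to X$, $C_t:X\to Y$, $D_t:U\to Y$ and the equations $x_{t+1}=A_tx_t+B_tu^\circ_t$, $y^\circ_t=C_tx_t+D_tu^\circ_t$, $u^\circ=\uparrow_{\overline m}u$, $y=\downarrow_{\overline n}y^\circ$ (input $u$, state $x$, output $y$); the part with input $u^\circ$ and output $y^\circ$ is the central system. EMPs: a $V$-valued $(T,z)$-EMP ($z\ne0$) is $v_t=z^{-t}\sum_{k=0}^{T-1}\widehat v_ke^{2\pi jtk/T}$, $t\in\mathbb Z$; $\mathcal F_{T,z}v:=(\widehat v_k)_{k=0}^{T-1}$ with $\widehat v_k=\frac1T\sum_{t=0}^{T-1}v_tz^te^{-2\pi jtk/T}$. An EMP is identified with its restriction to any set containing $T$ consecutive integers (e.g. $\mathbb N_0$ or $\{0,\dots,T-1\}$), and $\mathcal F_{T,z}^{-1}$ returns the restriction to $\{0,\dots,T-1\}$. $\Pi_{T,w,q}:V^T\to V^{qT}$, $(\Pi_{T,w,q}v)_{t+kT}=w^{kT}v_t$ ($0\le t<T$, $0\le k<q$), and $\Pi^*_{T,w,q}:V^{qT}\to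 V^T$, $(\Pi^*_{T,w,q}v)_t=\sum_{k=0}^{q-1}\overline w^{kT}v_{t+kT}$. For a $T$-periodic operator sequence $A_t$: $\widehat A_k=\frac1T\sum_{t=0}^{T-1}A_te^{-2\pi jtk/T}$ and the Toeplitz transform $\mathcal T_T(A)$ is the $T\times T$ block operator matrix with entry $\widehat A_{(r-\ell)\bmod T}$ in row $r$, column $\ell$. $\mathcal N_T:=\mathrm{diag}(e^{2\pi jk/T}I)_{k=0}^{T-1}$ (identity of the relevant space). $\rho_T(\mathcal A):=\{z\in\mathbb C:\mathcal N_T-z\mathcal A\text{ has a bounded inverse}\}$. *)

theory Defs
  imports "HOL-Analysis.Analysis"
begin

class complex_vector = real_vector +
  fixes scaleC :: "complex \<Rightarrow> 'a \<Rightarrow> 'a" (infixr "*\<^sub>C" 75)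
  assumes scaleC_add_right: "scaleC a (x + y) = scaleC a x + scaleC a y"
    and scaleC_add_left: "scaleC (a + b) x = scaleC a x + scaleC b x"
    and scaleC_scaleC: "scaleC a (scaleC b x) = scaleC (a * b) x"
    and scaleC_one: "scaleC 1 x = x"
    and scaleR_scaleC: "scaleR r x = scaleC (complex_of_real r) x"

class complex_normed_vector = complex_vector + real_normed_vector +
  assumes norm_scaleC: "norm (scaleC a x) = cmod a * norm x"

class complex_inner = complex_normed_vector +
  fixes cinner :: "'a \<Rightarrow> 'a \<Rightarrow> complex"
  assumes cinner_commute: "cinner x y = cnj (cinner y x)"
    and cinner_add_left: "cinner (x + y) z = cinner x z + cinner y z"
    and cinner_scaleC_left: "cinner (scaleC r x) y = cnj r * cinner x y"
    and cinner_nonneg: "Im (cinner x x) = 0 \<and> 0 \<le> Re (cinner x x)"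
    and cinner_eq_zero_iff: "cinner x x = 0 \<longleftrightarrow> x = 0"
    and norm_eq_sqrt_cinner: "norm x = sqrt (Re (cinner x x))"

text \<open>A separable complex Hilbert space: complete complex inner product space whose
  (metric) topology is second countable (equivalently separable).\<close>
class sep_chilbert = complex_inner + complete_space + second_countable_topology

definition bounded_clinear :: "('a::complex_normed_vector \<Rightarrow> 'b::complex_normed_vector) \<Rightarrow> bool" where
  "bounded_clinear f \<longleftrightarrow> bounded_linear f \<and> (\<forall>c x. f (c *\<^sub>C x) = c *\<^sub>C f x)"

definition mbar :: "nat \<Rightarrow> nat \<Rightarrow> nat" where "mbar m n = m div gcd m n"
definition nbar :: "nat \<Rightarrow> nat \<Rightarrow> nat" where "nbar m n = n div gcd m n"

definition upsample :: "nat \<Rightarrow> (nat \<Rightarrow> 'v::zero) \<Rightarrow> nat \<Rightarrow> 'v" where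
  "upsample q v t = (if q dvd t then v (t div q) else 0)"

definition downsample :: "nat \<Rightarrow> (nat \<Rightarrow> 'v) \<Rightarrow> nat \<Rightarrow> 'v" where
  "downsample q v t = v (q * t)"

primrec central_state :: "(nat \<Rightarrow> 'x \<Rightarrow> 'x::plus) \<Rightarrow> (nat \<Rightarrow> 'u \<Rightarrow> 'x) \<Rightarrow> (nat \<Rightarrow> 'u) \<Rightarrow> 'x \<Rightarrow> nat \<Rightarrow> 'x" where
  "central_state A B uo x0 0 = x0"
| "central_state A B uo x0 (Suc t) = A t (central_state A B uo x0 t) + B t (uo t)"

definition central_output :: "(nat \<Rightarrow> 'x \<Rightarrow> 'y::plus) \<Rightarrow> (nat \<Rightarrow> 'u \<Rightarrow> 'y) \<Rightarrow> (nat \<Rightarrow> 'x) \<Rightarrow> (nat \<Rightarrow> 'u) \<Rightarrow> nat \<Rightarrow> 'y" where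
  "central_output C D x uo t = C t (x t) + D t (uo t)"

definition multirate_eqs ::
  "nat \<Rightarrow> nat \<Rightarrow> (nat \<Rightarrow> 'x \<Rightarrow> 'x::plus) \<Rightarrow> (nat \<Rightarrow> 'u::zero \<Rightarrow> 'x) \<Rightarrow> (nat \<Rightarrow> 'x \<Rightarrow> 'y::plus) \<Rightarrow> (nat \<Rightarrow> 'u \<Rightarrow> 'y)
   \<Rightarrow> (nat \<Rightarrow> 'u) \<Rightarrow> (nat \<Rightarrow> 'u) \<Rightarrow> (nat \<Rightarrow> 'x) \<Rightarrow> (nat \<Rightarrow> 'y) \<Rightarrow> (nat \<Rightarrow> 'y) \<Rightarrow> bool" where
  "multirate_eqs m n A B C D u uo x yo y \<longleftrightarrow>
     (\<forall>t. x (Suc t) = A t (x t) + B t (uo t)) \<and>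
     (\<forall>t. yo t = C t (x t) + D t (uo t)) \<and>
     uo = upsample (mbar m n) u \<and> y = downsample (nbar m n) yo"

definition emp_seq :: "nat \<Rightarrow> complex \<Rightarrow> (nat \<Rightarrow> 'v::complex_vector) \<Rightarrow> nat \<Rightarrow> 'v" where
  "emp_seq T z vh t = inverse (z ^ t) *\<^sub>C
     (\<Sum>k<T. exp (2 * of_real pi * \<i> * of_nat t * of_nat k / of_nat T) *\<^sub>C vh k)"

definition is_EMP :: "nat \<Rightarrow> complex \<Rightarrow> (nat \<Rightarrow> 'v::complex_vector) \<Rightarrow> bool" where
  "is_EMP T z v \<longleftrightarrow> (\<exists>vh. v = emp_seq T z vh)"

text \<open>Vectors in V^T are functions nat => V vanishing from index T on.\<close>
definition vecs :: "nat \<Rightarrow> (nat \<Rightarrow> 'v::zero) set" where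
  "vecs T = {v. \<forall>k\<ge>T. v k = 0}"

definition F_trans :: "nat \<Rightarrow> complex \<Rightarrow> (nat \<Rightarrow> 'v::complex_vector) \<Rightarrow> nat \<Rightarrow> 'v" where
  "F_trans T z v k = (if k < T then inverse (of_nat T) *\<^sub>C
     (\<Sum>t<T. (z ^ t * exp (- (2 * of_real pi * \<i> * of_nat t * of_nat k / of_nat T))) *\<^sub>C v t) else 0)"

definition Pi_op :: "nat \<Rightarrow> complex \<Rightarrow> nat \<Rightarrow> (nat \<Rightarrow> 'v::complex_vector) \<Rightarrow> nat \<Rightarrow> 'v" where
  "Pi_op T w q v i = (if i < q * T then (w ^ ((i div T) * T)) *\<^sub>C v (i mod T) else 0)"

definition Pi_adj :: "nat \<Rightarrow> complex \<Rightarrow> nat \<Rightarrow> (nat \<Rightarrow> 'v::complex_vector) \<Rightarrow> nat \<Rightarrow> 'v" where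
  "Pi_adj T w q v t = (if t < T then (\<Sum>k<q. (cnj w ^ (k * T)) *\<^sub>C v (t + k * T)) else 0)"

definition hat_op :: "nat \<Rightarrow> (nat \<Rightarrow> 'a \<Rightarrow> 'b::complex_vector) \<Rightarrow> nat \<Rightarrow> 'a \<Rightarrow> 'b" where
  "hat_op T A k x = inverse (of_nat T) *\<^sub>C
     (\<Sum>t<T. exp (- (2 * of_real pi * \<i> * of_nat t * of_nat k / of_nat T)) *\<^sub>C A t x)"

text \<open>Toeplitz transform: block matrix with entry hat A_{(r-l) mod T} at (r,l).\<close>
definition toeplitz :: "nat \<Rightarrow> (nat \<Rightarrow> 'a \<Rightarrow> 'b::complex_vector) \<Rightarrow> (nat \<Rightarrow> 'a) \<Rightarrow> nat \<Rightarrow> 'b" where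
  "toeplitz T A v r = (if r < T then (\<Sum>l<T. hat_op T A (nat ((int r - int l) mod int T)) (v l)) else 0)"

definition N_op :: "nat \<Rightarrow> (nat \<Rightarrow> 'v::complex_vector) \<Rightarrow> nat \<Rightarrow> 'v" where
  "N_op T v k = (if k < T then exp (2 * of_real pi * \<i> * of_nat k / of_nat T) *\<^sub>C v k else 0)"

definition has_bounded_inverse :: "nat \<Rightarrow> ((nat \<Rightarrow> 'v::complex_normed_vector) \<Rightarrow> nat \<Rightarrow> 'v) \<Rightarrow> bool" where
  "has_bounded_inverse T L \<longleftrightarrow> (\<exists>G.
     (\<forall>v\<in>vecs T. G v \<in> vecs T \<and> G (L v) = v \<and> L (G v) = v) \<and>
     (\<forall>a b v w. v \<in> vecs T \<longrightarrow> w \<in> vecs T \<longrightarrow>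
        G (\<lambda>k. a *\<^sub>C v k + b *\<^sub>C w k) = (\<lambda>k. a *\<^sub>C G v k + b *\<^sub>C G w k)) \<and>
     (\<exists>K. \<forall>v\<in>vecs T. (\<Sum>k<T. norm (G v k)) \<le> K * (\<Sum>k<T. norm (v k))))"

definition rho :: "nat \<Rightarrow> ((nat \<Rightarrow> 'v::complex_normed_vector) \<Rightarrow> nat \<Rightarrow> 'v) \<Rightarrow> complex set" where
  "rho T AA = {z. has_bounded_inverse T (\<lambda>v k. N_op T v k - z *\<^sub>C AA v k)}"

definition vec_inv :: "nat \<Rightarrow> ((nat \<Rightarrow> 'v::zero) \<Rightarrow> nat \<Rightarrow> 'v) \<Rightarrow> (nat \<Rightarrow> 'v) \<Rightarrow> nat \<Rightarrow> 'v" where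
  "vec_inv T L v = (SOME w. w \<in> vecs T \<and> L w = v)"

definition star_eqs ::
  "nat \<Rightarrow> nat \<Rightarrow> (nat \<Rightarrow> 'x \<Rightarrow> 'x::complex_vector) \<Rightarrow> (nat \<Rightarrow> 'u::complex_vector \<Rightarrow> 'x)
   \<Rightarrow> (nat \<Rightarrow> 'x \<Rightarrow> 'y::complex_vector) \<Rightarrow> (nat \<Rightarrow> 'u \<Rightarrow> 'y) \<Rightarrow> complex
   \<Rightarrow> (nat \<Rightarrow> 'u) \<Rightarrow> (nat \<Rightarrow> 'u) \<Rightarrow> (nat \<Rightarrow> 'x) \<Rightarrow> (nat \<Rightarrow> 'y) \<Rightarrow> (nat \<Rightarrow> 'y) \<Rightarrow> bool" where
  "star_eqs m n A B C D z u uo x yo y \<longleftrightarrow>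
     (let P = m * nbar m n in
       N_op P x = (\<lambda>k. z *\<^sub>C toeplitz P A x k + z *\<^sub>C toeplitz P B uo k) \<and>
       yo = (\<lambda>k. toeplitz P C x k + toeplitz P D uo k) \<and>
       uo = (\<lambda>k. inverse (of_nat (mbar m n)) *\<^sub>C Pi_op n 1 (mbar m n) u k) \<and>
       y = Pi_adj m 1 (nbar m n) yo)"

definition transfer ::
  "nat \<Rightarrow> nat \<Rightarrow> (nat \<Rightarrow> 'x \<Rightarrow> 'x::complex_vector) \<Rightarrow> (nat \<Rightarrow> 'u::complex_vector \<Rightarrow> 'x)
   \<Rightarrow> (nat \<Rightarrow> 'x \<Rightarrow> 'y::complex_vector) \<Rightarrow> (nat \<Rightarrow> 'u \<Rightarrow> 'y) \<Rightarrow> complex \<Rightarrow> (nat \<Rightarrow> 'u) \<Rightarrow> nat \<Rightarrow> 'y" where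
  "transfer m n A B C D z u =
     (let P = m * nbar m n;
          Pu = (\<lambda>k. inverse (of_nat (mbar m n)) *\<^sub>C Pi_op n 1 (mbar m n) u k);
          R = vec_inv P (\<lambda>v k. N_op P v k - z *\<^sub>C toeplitz P A v k)
      in Pi_adj m 1 (nbar m n)
           (\<lambda>k. z *\<^sub>C toeplitz P C (R (toeplitz P B Pu)) k + toeplitz P D Pu k))"

end

theory Submission
  imports Defs
begin

(* A (T, z)-EMP is z^-t times a T-periodic signal, i.e. a combination of the modes
   z^-t w^(t k), w = exp (2 pi i / T); its Fourier coefficients recover it uniquely.
   Expanding a T-periodic operator sequence as A t = sum_k w^(t k) hat A_k shows that it maps
   the mode l to the modes k + l, so on coefficients it acts by the Toeplitz matrix of hat A;
   the time shift multiplies the mode k by z w^k, i.e. acts as N / z; upsampling and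
   downsampling act by Pi / mbar and Pi^*. Hence the equations of the multirate system hold for
   EMP signals exactly when their coefficients satisfy the frequency-domain equations, and when
   N - z T(A) is invertible these have exactly one solution, computed by the resolvent. *)

interpretation complex_module: module "scaleC :: complex \<Rightarrow> 'a::complex_vector \<Rightarrow> 'a"
  by standard (simp_all add: scaleC_add_right scaleC_add_left scaleC_scaleC scaleC_one)

lemma bounded_clinear_imp_module_hom:
  "bounded_clinear f \<Longrightarrow> module_hom scaleC scaleC f"
  unfolding bounded_clinear_def module_hom_def module_hom_axioms_def
  by (auto simp: complex_module.module_axioms linear_add dest: bounded_linear.linear)

section \<open>Roots of unity\<close>

definition unit_root :: "nat \<Rightarrow> complex" where
  "unit_root T = exp (2 * of_real pi * \<i> / of_nat T)"

lemma unit_root_nonzero [simp]: "unit_root T \<noteq> 0"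
  by (simp add: unit_root_def)

lemma unit_root_power: "unit_root T ^ j = exp (2 * of_real pi * \<i> * of_nat j / of_nat T)"
proof -
  have "unit_root T ^ j = exp (of_nat j * (2 * of_real pi * \<i> / of_nat T))"
    unfolding unit_root_def by (rule exp_of_nat_mult[symmetric])
  then show ?thesis by (simp add: mult_ac)
qed

lemma unit_root_power_eq_iff:
  "0 < T \<Longrightarrow> unit_root T ^ j = unit_root T ^ k \<longleftrightarrow> j mod T = k mod T"
  by (simp add: unit_root_power complex_root_unity_eq)

lemma unit_root_power_mod: "0 < T \<Longrightarrow> unit_root T ^ (j mod T) = unit_root T ^ j"
  by (simp add: unit_root_power_eq_iff)

lemma unit_root_power_self: "0 < T \<Longrightarrow> unit_root T ^ T = 1"
  using unit_root_power_mod[of T T] by simp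

lemma unit_root_mult_power: "0 < a \<Longrightarrow> unit_root (a * b) ^ a = unit_root b"
  unfolding unit_root_power by (simp add: unit_root_def)

lemma sum_powers_root_of_unity:
  fixes q :: "'a::field"
  assumes "q ^ T = 1"
  shows "(\<Sum>t<T. q ^ t) = (if q = 1 then of_nat T else 0)"
  using assms by (simp add: sum_gp_strict)

lemma unit_root_orthogonality:
  assumes "k < T" "l < T"
  shows "(\<Sum>t<T. unit_root T ^ (t * l) * inverse (unit_root T ^ (t * k))) =
    (if l = k then of_nat T else 0)"
proof -
  let ?q = "unit_root T ^ l / unit_root T ^ k"
  have T: "0 < T" using assms by simp
  have "?q ^ T = 1"
    using unit_root_power_self[OF T]
    by (simp add: power_divide flip: power_mult) (simp add: power_mult mult.commute)
  moreover have "?q = 1 \<longleftrightarrow> l = k"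
    using assms unit_root_power_eq_iff[OF T, of l k] by simp
  moreover have "unit_root T ^ (t * l) * inverse (unit_root T ^ (t * k)) = ?q ^ t" for t
    by (simp add: divide_inverse mult.commute[of t] power_mult power_mult_distrib power_inverse)
  ultimately show ?thesis by (simp add: sum_powers_root_of_unity)
qed

lemma emp_seq_unit_root:
  "emp_seq T z vh t = inverse (z ^ t) *\<^sub>C (\<Sum>k<T. unit_root T ^ (t * k) *\<^sub>C vh k)"
  unfolding emp_seq_def unit_root_power by (simp add: mult.assoc)

lemma F_trans_unit_root:
  "F_trans T z v k = (if k < T then inverse (of_nat T) *\<^sub>C
     (\<Sum>t<T. (z ^ t * inverse (unit_root T ^ (t * k))) *\<^sub>C v t) else 0)"
  unfolding F_trans_def unit_root_power by (simp add: mult.assoc exp_minus)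

lemma hat_op_unit_root:
  "hat_op T A k x = inverse (of_nat T) *\<^sub>C (\<Sum>t<T. inverse (unit_root T ^ (t * k)) *\<^sub>C A t x)"
  unfolding hat_op_def unit_root_power by (simp add: mult.assoc exp_minus)

lemma N_op_unit_root: "N_op T v k = (if k < T then unit_root T ^ k *\<^sub>C v k else 0)"
  unfolding N_op_def unit_root_power ..

lemma F_trans_in_vecs: "F_trans T z v \<in> vecs T"
  by (simp add: vecs_def F_trans_def)

lemma N_op_in_vecs: "N_op T v \<in> vecs T"
  by (simp add: vecs_def N_op_def)

lemma toeplitz_in_vecs: "toeplitz T A v \<in> vecs T"
  by (simp add: vecs_def toeplitz_def)

lemma Pi_adj_in_vecs: "Pi_adj T w q v \<in> vecs T"
  by (simp add: vecs_def Pi_adj_def)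

lemma vecs_add:
  fixes v w :: "nat \<Rightarrow> 'v::complex_vector"
  shows "v \<in> vecs T \<Longrightarrow> w \<in> vecs T \<Longrightarrow> (\<lambda>k. v k + w k) \<in> vecs T"
  by (simp add: vecs_def)

lemma vecs_scale:
  fixes v :: "nat \<Rightarrow> 'v::complex_vector"
  shows "v \<in> vecs T \<Longrightarrow> (\<lambda>k. c *\<^sub>C v k) \<in> vecs T"
  by (simp add: vecs_def)

lemma emp_seq_cong: "(\<And>k. k < T \<Longrightarrow> vh k = vh' k) \<Longrightarrow> emp_seq T z vh = emp_seq T z vh'"
  unfolding emp_seq_def by (intro ext arg_cong[where f="scaleC _"] sum.cong) auto

lemma F_trans_emp_seq:
  fixes vh :: "nat \<Rightarrow> 'v::complex_vector"
  assumes "z \<noteq> 0"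
  shows "F_trans T z (emp_seq T z vh) k = (if k < T then vh k else 0)"
proof (cases "k < T")
  case True
  have "F_trans T z (emp_seq T z vh) k = inverse (of_nat T) *\<^sub>C
      (\<Sum>t<T. \<Sum>l<T. (unit_root T ^ (t * l) * inverse (unit_root T ^ (t * k))) *\<^sub>C vh l)"
    using True assms
    by (simp add: F_trans_unit_root emp_seq_unit_root complex_module.scale_sum_right scaleC_scaleC
        field_simps)
  also have "\<dots> = inverse (of_nat T) *\<^sub>C
      (\<Sum>l<T. (\<Sum>t<T. unit_root T ^ (t * l) * inverse (unit_root T ^ (t * k))) *\<^sub>C vh l)"
    by (subst sum.swap) (simp add: complex_module.scale_sum_left)
  also have "\<dots> = inverse (of_nat T) *\<^sub>C (of_nat T *\<^sub>C vh k)"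
    using True by (simp add: unit_root_orthogonality if_distrib[of "\<lambda>c. c *\<^sub>C _"] cong: if_cong)
  also have "\<dots> = vh k"
    using True by (simp add: scaleC_scaleC)
  finally show ?thesis using True by simp
qed (simp add: F_trans_def)

lemma F_trans_emp_seq_vecs:
  "z \<noteq> 0 \<Longrightarrow> vh \<in> vecs T \<Longrightarrow> F_trans T z (emp_seq T z vh) = vh"
  by (auto simp: F_trans_emp_seq vecs_def)

lemma emp_seq_inject:
  "z \<noteq> 0 \<Longrightarrow> vh \<in> vecs T \<Longrightarrow> vh' \<in> vecs T \<Longrightarrow>
    emp_seq T z vh = emp_seq T z vh' \<longleftrightarrow> vh = vh'"
  by (metis F_trans_emp_seq_vecs)

lemma is_EMP_iff:
  assumes "z \<noteq> 0"
  shows "is_EMP T z v \<longleftrightarrow> v = emp_seq T z (F_trans T z v)"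
proof
  assume "is_EMP T z v"
  then obtain vh where "v = emp_seq T z vh" by (auto simp: is_EMP_def)
  then show "v = emp_seq T z (F_trans T z v)"
    using assms by (simp add: F_trans_emp_seq cong: emp_seq_cong)
qed (auto simp: is_EMP_def)

lemma emp_seq_at_0: "emp_seq T z vh 0 = (\<Sum>k<T. vh k)"
  by (simp add: emp_seq_unit_root)

lemma emp_seq_add: "emp_seq T z vh t + emp_seq T z wh t = emp_seq T z (\<lambda>k. vh k + wh k) t"
  by (simp add: emp_seq_unit_root scaleC_add_right sum.distrib)

lemma emp_seq_Suc:
  "z \<noteq> 0 \<Longrightarrow> emp_seq T z vh (Suc t) = emp_seq T z (\<lambda>k. inverse z *\<^sub>C N_op T vh k) t"
  by (simp add: emp_seq_unit_root N_op_unit_root complex_module.scale_sum_right scaleC_scaleC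
      power_add mult_ac)

section \<open>Periodic operators and the Toeplitz transform\<close>

lemma periodic_mod:
  assumes "\<forall>t. f (t + P) = f t"
  shows "f (t mod P) = f (t :: nat)"
proof -
  have "f (s + q * P) = f s" for s q
  proof (induction q)
    case (Suc q)
    have "f (s + Suc q * P) = f (s + q * P + P)" by (simp add: add_ac)
    then show ?case using assms Suc by simp
  qed simp
  then show ?thesis by (metis mod_div_mult_eq add.commute)
qed

lemma periodic_op_fourier_series:
  fixes A :: "nat \<Rightarrow> 'a \<Rightarrow> 'b::complex_vector"
  assumes P: "0 < P" and per: "\<forall>t. A (t + P) = A t"
  shows "A t x = (\<Sum>k<P. unit_root P ^ (t * k) *\<^sub>C hat_op P A k x)"
proof -
  have "unit_root P ^ (t * k) *\<^sub>C hat_op P A k x = inverse (of_nat P) *\<^sub>C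
      (\<Sum>s<P. (unit_root P ^ (k * (t mod P)) * inverse (unit_root P ^ (k * s))) *\<^sub>C A s x)" for k
  proof -
    have "unit_root P ^ (t * k) = unit_root P ^ (k * (t mod P))"
      using P by (metis unit_root_power_mod mod_mult_right_eq mult.commute)
    then show ?thesis
      by (simp add: hat_op_unit_root complex_module.scale_sum_right scaleC_scaleC mult_ac)
  qed
  then have "(\<Sum>k<P. unit_root P ^ (t * k) *\<^sub>C hat_op P A k x) = inverse (of_nat P) *\<^sub>C
      (\<Sum>k<P. \<Sum>s<P. (unit_root P ^ (k * (t mod P)) * inverse (unit_root P ^ (k * s))) *\<^sub>C A s x)"
    by (simp add: complex_module.scale_sum_right)
  also have "\<dots> = inverse (of_nat P) *\<^sub>C
      (\<Sum>s<P. (\<Sum>k<P. unit_root P ^ (k * (t mod P)) * inverse (unit_root P ^ (k * s))) *\<^sub>C A s x)"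
    by (subst sum.swap) (simp add: complex_module.scale_sum_left)
  also have "\<dots> = inverse (of_nat P) *\<^sub>C (of_nat P *\<^sub>C A (t mod P) x)"
    using P by (simp add: unit_root_orthogonality if_distrib[of "\<lambda>c. c *\<^sub>C _"] cong: if_cong)
  also have "\<dots> = A t x"
    using P periodic_mod[OF per] by (simp add: scaleC_scaleC)
  finally show ?thesis ..
qed

lemma nat_mod_diff_add_mod:
  assumes "0 < (P::nat)"
  shows "(nat ((int r - int l) mod int P) + l) mod P = r mod P"
proof -
  have "int ((nat ((int r - int l) mod int P) + l) mod P) = ((int r - int l) mod int P + int l) mod int P"
    using assms by (simp add: of_nat_mod)
  also have "\<dots> = int (r mod P)"
    by (simp add: mod_add_left_eq of_nat_mod)
  finally show ?thesis by simp
qed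

lemma sum_reindex_mod_diff:
  fixes g :: "nat \<Rightarrow> 'a::comm_monoid_add"
  assumes "0 < P"
  shows "(\<Sum>r<P. g (nat ((int r - int l) mod int P))) = (\<Sum>k<P. g k)"
proof (rule sum.reindex_bij_witness[where i="\<lambda>k. (k + l) mod P" and j="\<lambda>r. nat ((int r - int l) mod int P)"])
  fix r assume "r \<in> {..<P}"
  then show "(nat ((int r - int l) mod int P) + l) mod P = r"
    using assms by (simp add: nat_mod_diff_add_mod)
  show "nat ((int r - int l) mod int P) \<in> {..<P}"
    using assms by (simp add: nat_less_iff)
next
  fix k assume "k \<in> {..<P}"
  then show "nat ((int ((k + l) mod P) - int l) mod int P) = k"
    by (simp add: mod_diff_left_eq zmod_int)
  show "(k + l) mod P \<in> {..<P}"
    using assms by simp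
qed simp

lemma periodic_op_emp_seq:
  fixes A :: "nat \<Rightarrow> 'a::complex_vector \<Rightarrow> 'b::complex_vector"
  assumes P: "0 < P" and per: "\<forall>t. A (t + P) = A t"
    and lin: "\<And>t. module_hom scaleC scaleC (A t)"
  shows "A t (emp_seq P z xv t) = emp_seq P z (toeplitz P A xv) t"
proof -
  let ?d = "\<lambda>r l. nat ((int r - int l) mod int P)"
  have shift: "unit_root P ^ (t * l) *\<^sub>C A t x =
      (\<Sum>r<P. unit_root P ^ (t * r) *\<^sub>C hat_op P A (?d r l) x)" for l x
  proof -
    have "unit_root P ^ (t * l) *\<^sub>C A t x = (\<Sum>k<P. unit_root P ^ (t * (k + l)) *\<^sub>C hat_op P A k x)"
      by (subst periodic_op_fourier_series[OF P per])
        (simp add: complex_module.scale_sum_right scaleC_scaleC power_add add_mult_distrib2 mult.commute)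
    also have "\<dots> = (\<Sum>r<P. unit_root P ^ (t * (?d r l + l)) *\<^sub>C hat_op P A (?d r l) x)"
      by (rule sum_reindex_mod_diff[OF P, symmetric])
    also have "\<dots> = (\<Sum>r<P. unit_root P ^ (t * r) *\<^sub>C hat_op P A (?d r l) x)"
      using P by (intro sum.cong refl arg_cong2[where f=scaleC])
        (metis unit_root_power_eq_iff mod_mult_right_eq nat_mod_diff_add_mod mod_less lessThan_iff)
    finally show ?thesis .
  qed
  have "A t (emp_seq P z xv t) = inverse (z ^ t) *\<^sub>C (\<Sum>l<P. unit_root P ^ (t * l) *\<^sub>C A t (xv l))"
    by (simp add: emp_seq_unit_root module_hom.scale[OF lin] module_hom.sum[OF lin])
  also have "\<dots> = inverse (z ^ t) *\<^sub>C (\<Sum>l<P. \<Sum>r<P. unit_root P ^ (t * r) *\<^sub>C hat_op P A (?d r l) (xv l))"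
    by (simp only: shift)
  also have "\<dots> = emp_seq P z (toeplitz P A xv) t"
    by (subst sum.swap) (simp add: emp_seq_unit_root toeplitz_def complex_module.scale_sum_right)
  finally show ?thesis .
qed

lemma toeplitz_scale:
  assumes "\<And>t. module_hom scaleC scaleC (A t)"
  shows "toeplitz T A (\<lambda>l. c *\<^sub>C v l) = (\<lambda>r. c *\<^sub>C toeplitz T A v r)"
proof -
  have "hat_op T A k (c *\<^sub>C x) = c *\<^sub>C hat_op T A k x" for k x
    by (simp add: hat_op_def module_hom.scale[OF assms] complex_module.scale_sum_right
        scaleC_scaleC mult_ac)
  then show ?thesis
    by (simp add: fun_eq_iff toeplitz_def complex_module.scale_sum_right)
qed

section \<open>Upsampling and downsampling\<close>

lemma sum_unit_root_powers:
  assumes "0 < T"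
  shows "(\<Sum>j<T. (unit_root T ^ t) ^ j) = (if T dvd t then of_nat T else 0)"
proof -
  have "(unit_root T ^ t) ^ T = 1"
    by (metis power_mult mult.commute unit_root_power_self[OF assms] power_one)
  moreover have "unit_root T ^ t = 1 \<longleftrightarrow> T dvd t"
    using unit_root_power_eq_iff[OF assms, of t 0] by (simp add: dvd_eq_mod_eq_0)
  ultimately show ?thesis by (simp add: sum_powers_root_of_unity)
qed

definition upsample_spectrum :: "nat \<Rightarrow> nat \<Rightarrow> (nat \<Rightarrow> 'v::complex_vector) \<Rightarrow> nat \<Rightarrow> 'v" where
  "upsample_spectrum q n uv = (\<lambda>k. inverse (of_nat q) *\<^sub>C Pi_op n 1 q uv k)"

lemma upsample_spectrum_in_vecs: "upsample_spectrum q n uv \<in> vecs (q * n)"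
  by (simp add: vecs_def upsample_spectrum_def Pi_op_def)

lemma upsample_emp_seq:
  fixes uv :: "nat \<Rightarrow> 'v::complex_vector"
  assumes q: "0 < q" and n: "0 < n"
  shows "upsample q (emp_seq n (z ^ q) uv) = emp_seq (q * n) z (upsample_spectrum q n uv)"
proof
  fix t
  let ?w = "unit_root (q * n)"
  have root: "?w ^ (t * (k + j * n)) = (unit_root q ^ t) ^ j * ?w ^ (t * k)" for j k
  proof -
    have "?w ^ (t * (k + j * n)) = (?w ^ n) ^ (t * j) * ?w ^ (t * k)"
      by (simp add: power_add algebra_simps flip: power_mult)
    also have "?w ^ n = unit_root q"
      using unit_root_mult_power[OF n, of q] by (simp add: mult.commute)
    finally show ?thesis
      by (simp add: power_mult)
  qed
  have "emp_seq (q * n) z (upsample_spectrum q n uv) t = inverse (z ^ t) *\<^sub>C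
      (\<Sum>i<q * n. (?w ^ (t * i) / of_nat q) *\<^sub>C uv (i mod n))"
    unfolding emp_seq_unit_root upsample_spectrum_def Pi_op_def
    by (intro arg_cong[where f="scaleC _"] sum.cong) (simp_all add: scaleC_scaleC divide_inverse)
  also have "\<dots> = inverse (z ^ t) *\<^sub>C
      (\<Sum>j<q. \<Sum>k<n. ((unit_root q ^ t) ^ j * ?w ^ (t * k) / of_nat q) *\<^sub>C uv k)"
    unfolding sum_mult_product
    by (intro arg_cong[where f="scaleC _"] sum.cong) (simp_all add: root)
  also have "\<dots> = inverse (z ^ t) *\<^sub>C
      (\<Sum>k<n. ((\<Sum>j<q. (unit_root q ^ t) ^ j) * ?w ^ (t * k) / of_nat q) *\<^sub>C uv k)"
    by (subst sum.swap) (simp add: complex_module.scale_sum_left sum_distrib_right sum_divide_distrib)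
  also have "\<dots> = upsample q (emp_seq n (z ^ q) uv) t"
  proof (cases "q dvd t")
    case True
    then obtain s where t: "t = q * s" ..
    have "?w ^ (t * k) = unit_root n ^ (s * k)" for k
      using unit_root_mult_power[OF q, of n] by (simp add: t mult.assoc power_mult)
    moreover have "t div q = s" "z ^ t = (z ^ q) ^ s"
      using q by (simp_all add: t power_mult)
    ultimately show ?thesis
      using True q by (simp add: sum_unit_root_powers upsample_def emp_seq_unit_root)
  qed (use q in \<open>simp add: sum_unit_root_powers upsample_def\<close>)
  finally show "upsample q (emp_seq n (z ^ q) uv) t = emp_seq (q * n) z (upsample_spectrum q n uv) t" ..
qed

lemma downsample_emp_seq:
  fixes yov :: "nat \<Rightarrow> 'v::complex_vector"
  assumes m: "0 < m" and q: "0 < q"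
  shows "downsample q (emp_seq (m * q) z yov) = emp_seq m (z ^ q) (Pi_adj m 1 q yov)"
proof
  fix t
  have root: "unit_root (q * m) ^ (q * t * (k + j * m)) = unit_root m ^ (t * k)" for j k
  proof -
    have "unit_root (q * m) ^ (q * t * (k + j * m)) = unit_root m ^ (t * (k + j * m))"
      using unit_root_mult_power[OF q, of m] by (simp add: mult.commute mult.left_commute power_mult)
    also have "\<dots> = unit_root m ^ (t * k)"
      using m by (simp add: unit_root_power_eq_iff add_mult_distrib2 mult.assoc[symmetric])
    finally show ?thesis .
  qed
  have "downsample q (emp_seq (m * q) z yov) t = inverse (z ^ (q * t)) *\<^sub>C
      (\<Sum>j<q. \<Sum>k<m. unit_root m ^ (t * k) *\<^sub>C yov (k + j * m))"
    unfolding downsample_def emp_seq_unit_root mult.commute[of m q] sum_mult_product root ..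
  also have "\<dots> = emp_seq m (z ^ q) (Pi_adj m 1 q yov) t"
    unfolding emp_seq_unit_root Pi_adj_def power_mult
    by (subst sum.swap) (simp add: complex_module.scale_sum_right)
  finally show "downsample q (emp_seq (m * q) z yov) t = emp_seq m (z ^ q) (Pi_adj m 1 q yov) t" .
qed

lemma emp_state_equation_iff:
  fixes A :: "nat \<Rightarrow> 'x::complex_vector \<Rightarrow> 'x" and B :: "nat \<Rightarrow> 'u::complex_vector \<Rightarrow> 'x"
  assumes P: "0 < P" and z: "z \<noteq> 0"
    and per_A: "\<forall>t. A (t + P) = A t" and per_B: "\<forall>t. B (t + P) = B t"
    and lin_A: "\<And>t. module_hom scaleC scaleC (A t)" and lin_B: "\<And>t. module_hom scaleC scaleC (B t)"
  shows "(\<forall>t. emp_seq P z xv (Suc t) = A t (emp_seq P z xv t) + B t (emp_seq P z uov t)) \<longleftrightarrow>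
    N_op P xv = (\<lambda>k. z *\<^sub>C toeplitz P A xv k + z *\<^sub>C toeplitz P B uov k)"
proof -
  have "(\<forall>t. emp_seq P z xv (Suc t) = A t (emp_seq P z xv t) + B t (emp_seq P z uov t)) \<longleftrightarrow>
      emp_seq P z (\<lambda>k. inverse z *\<^sub>C N_op P xv k) =
      emp_seq P z (\<lambda>k. toeplitz P A xv k + toeplitz P B uov k)"
    by (simp add: fun_eq_iff emp_seq_Suc[OF z] emp_seq_add
        periodic_op_emp_seq[OF P per_A lin_A] periodic_op_emp_seq[OF P per_B lin_B])
  also have "\<dots> \<longleftrightarrow> (\<lambda>k. inverse z *\<^sub>C N_op P xv k) = (\<lambda>k. toeplitz P A xv k + toeplitz P B uov k)"
    by (intro emp_seq_inject z vecs_scale vecs_add N_op_in_vecs toeplitz_in_vecs)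
  also have "\<dots> \<longleftrightarrow> N_op P xv = (\<lambda>k. z *\<^sub>C toeplitz P A xv k + z *\<^sub>C toeplitz P B uov k)"
  proof -
    have "inverse z *\<^sub>C a = b \<longleftrightarrow> a = z *\<^sub>C b" for a b :: 'x
      using z by (metis scaleC_scaleC right_inverse left_inverse scaleC_one)
    then show ?thesis by (simp add: fun_eq_iff scaleC_add_right)
  qed
  finally show ?thesis .
qed

lemma emp_output_equation_iff:
  fixes C :: "nat \<Rightarrow> 'x::complex_vector \<Rightarrow> 'y::complex_vector" and D :: "nat \<Rightarrow> 'u::complex_vector \<Rightarrow> 'y"
  assumes P: "0 < P" and z: "z \<noteq> 0" and yov: "yov \<in> vecs P"
    and per_C: "\<forall>t. C (t + P) = C t" and per_D: "\<forall>t. D (t + P) = D t"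
    and lin_C: "\<And>t. module_hom scaleC scaleC (C t)" and lin_D: "\<And>t. module_hom scaleC scaleC (D t)"
  shows "(\<forall>t. emp_seq P z yov t = C t (emp_seq P z xv t) + D t (emp_seq P z uov t)) \<longleftrightarrow>
    yov = (\<lambda>k. toeplitz P C xv k + toeplitz P D uov k)"
proof -
  have "(\<forall>t. emp_seq P z yov t = C t (emp_seq P z xv t) + D t (emp_seq P z uov t)) \<longleftrightarrow>
      emp_seq P z yov = emp_seq P z (\<lambda>k. toeplitz P C xv k + toeplitz P D uov k)"
    by (simp add: fun_eq_iff emp_seq_add
        periodic_op_emp_seq[OF P per_C lin_C] periodic_op_emp_seq[OF P per_D lin_D])
  also have "\<dots> \<longleftrightarrow> yov = (\<lambda>k. toeplitz P C xv k + toeplitz P D uov k)"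
    by (intro emp_seq_inject z yov vecs_add toeplitz_in_vecs)
  finally show ?thesis .
qed

lemma has_bounded_inverse_solve_iff:
  assumes "has_bounded_inverse T L" and "v \<in> vecs T" and "w \<in> vecs T"
  shows "L w = v \<longleftrightarrow> w = vec_inv T L v"
proof -
  obtain G where G: "\<forall>v\<in>vecs T. G v \<in> vecs T \<and> G (L v) = v \<and> L (G v) = v"
    using assms(1) unfolding has_bounded_inverse_def by blast
  have "vec_inv T L v = G v"
    unfolding vec_inv_def using G assms(2) by (intro some_equality) metis+
  then show ?thesis
    using G assms(2,3) by metis
qed

lemma vec_inv_in_vecs:
  assumes "has_bounded_inverse T L" and "v \<in> vecs T"
  shows "vec_inv T L v \<in> vecs T"
proof -
  obtain G where "\<forall>v\<in>vecs T. G v \<in> vecs T \<and> G (L v) = v \<and> L (G v) = v"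
    using assms(1) unfolding has_bounded_inverse_def by blast
  then show ?thesis
    using has_bounded_inverse_solve_iff[OF assms] assms(2) by metis
qed

lemma vec_inv_scale:
  assumes "has_bounded_inverse T L" and "v \<in> vecs T"
  shows "vec_inv T L (\<lambda>k. c *\<^sub>C v k) = (\<lambda>k. c *\<^sub>C vec_inv T L v k)"
proof -
  obtain G where G: "\<forall>v\<in>vecs T. G v \<in> vecs T \<and> G (L v) = v \<and> L (G v) = v"
    and G_lin: "\<forall>a b v w. v \<in> vecs T \<longrightarrow> w \<in> vecs T \<longrightarrow>
        G (\<lambda>k. a *\<^sub>C v k + b *\<^sub>C w k) = (\<lambda>k. a *\<^sub>C G v k + b *\<^sub>C G w k)"
    using assms(1) unfolding has_bounded_inverse_def by blast
  have G_eq: "G w = vec_inv T L w" if "w \<in> vecs T" for w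
    using G that has_bounded_inverse_solve_iff[OF assms(1)] by metis
  have "G (\<lambda>k. c *\<^sub>C v k) = (\<lambda>k. c *\<^sub>C G v k)"
    using G_lin[rule_format, OF assms(2) assms(2), of c 0] by simp
  then show ?thesis
    using assms(2) by (simp add: G_eq vecs_scale)
qed

definition resolvent ::
  "nat \<Rightarrow> (nat \<Rightarrow> 'x \<Rightarrow> 'x::complex_vector) \<Rightarrow> complex \<Rightarrow> (nat \<Rightarrow> 'x) \<Rightarrow> nat \<Rightarrow> 'x" where
  "resolvent P A z = vec_inv P (\<lambda>v k. N_op P v k - z *\<^sub>C toeplitz P A v k)"

lemma resolvent_in_vecs:
  "z \<in> rho P (toeplitz P A) \<Longrightarrow> v \<in> vecs P \<Longrightarrow> resolvent P A z v \<in> vecs P"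
  unfolding rho_def resolvent_def by (simp add: vec_inv_in_vecs)

lemma state_equation_iff_resolvent:
  assumes "z \<in> rho P (toeplitz P A)" and xv: "xv \<in> vecs P" and bv: "bv \<in> vecs P"
  shows "N_op P xv = (\<lambda>k. z *\<^sub>C toeplitz P A xv k + z *\<^sub>C bv k) \<longleftrightarrow>
    xv = (\<lambda>k. z *\<^sub>C resolvent P A z bv k)"
proof -
  let ?L = "\<lambda>v k. N_op P v k - z *\<^sub>C toeplitz P A v k"
  have inv: "has_bounded_inverse P ?L"
    using assms(1) by (simp add: rho_def)
  have "N_op P xv = (\<lambda>k. z *\<^sub>C toeplitz P A xv k + z *\<^sub>C bv k) \<longleftrightarrow> ?L xv = (\<lambda>k. z *\<^sub>C bv k)"
    by (auto simp: fun_eq_iff algebra_simps)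
  also have "\<dots> \<longleftrightarrow> xv = vec_inv P ?L (\<lambda>k. z *\<^sub>C bv k)"
    by (rule has_bounded_inverse_solve_iff[OF inv vecs_scale[OF bv] xv])
  finally show ?thesis
    by (simp add: resolvent_def vec_inv_scale[OF inv bv])
qed

section \<open>Multirate systems in the frequency domain\<close>

lemma central_state_iff:
  "x = central_state A B uo (x 0) \<longleftrightarrow> (\<forall>t. x (Suc t) = A t (x t) + B t (uo t))"
proof
  assume "\<forall>t. x (Suc t) = A t (x t) + B t (uo t)"
  then show "x = central_state A B uo (x 0)"
    by (intro ext, induct_tac xa) simp_all
qed (metis central_state.simps(2))

lemma multirate_eqs_iff_central:
  "multirate_eqs m n A B C D u uo x yo y \<longleftrightarrow>
    uo = upsample (mbar m n) u \<and> x = central_state A B uo (x 0) \<and>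
    yo = central_output C D x uo \<and> y = downsample (nbar m n) yo"
  unfolding multirate_eqs_def central_state_iff central_output_def by (auto simp: fun_eq_iff)

locale multirate_system =
  fixes m n :: nat
    and A :: "nat \<Rightarrow> 'x::complex_normed_vector \<Rightarrow> 'x" and B :: "nat \<Rightarrow> 'u::complex_vector \<Rightarrow> 'x"
    and C :: "nat \<Rightarrow> 'x \<Rightarrow> 'y::complex_vector" and D :: "nat \<Rightarrow> 'u \<Rightarrow> 'y"
  assumes m_pos: "0 < m" and n_pos: "0 < n"
    and per_A: "\<forall>t. A (t + m * nbar m n) = A t" and per_B: "\<forall>t. B (t + m * nbar m n) = B t"
    and per_C: "\<forall>t. C (t + m * nbar m n) = C t" and per_D: "\<forall>t. D (t + m * nbar m n) = D t"
    and lin_A: "\<And>t. module_hom scaleC scaleC (A t)" and lin_B: "\<And>t. module_hom scaleC scaleC (B t)"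
    and lin_C: "\<And>t. module_hom scaleC scaleC (C t)" and lin_D: "\<And>t. module_hom scaleC scaleC (D t)"
begin

abbreviation period :: nat where "period \<equiv> m * nbar m n"

lemma mbar_pos: "0 < mbar m n"
  using m_pos by (simp add: mbar_def div_greater_zero_iff gcd_le1_nat)

lemma nbar_pos: "0 < nbar m n"
  using n_pos by (simp add: nbar_def div_greater_zero_iff gcd_le2_nat)

lemma period_pos: "0 < period"
  using m_pos nbar_pos by simp

lemma mbar_mult: "mbar m n * n = period"
  unfolding mbar_def nbar_def by (metis div_mult_swap dvd_div_mult gcd_dvd1 gcd_dvd2 mult.commute)

lemma multirate_eqs_emp_seq_iff_star_eqs:
  assumes z: "z \<noteq> 0" and uov: "uov \<in> vecs period" and yov: "yov \<in> vecs period"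
    and yv: "yv \<in> vecs m"
  shows "multirate_eqs m n A B C D (emp_seq n (z ^ mbar m n) uv) (emp_seq period z uov)
      (emp_seq period z xv) (emp_seq period z yov) (emp_seq m (z ^ nbar m n) yv) \<longleftrightarrow>
    star_eqs m n A B C D z uv uov xv yov yv"
proof -
  have up: "emp_seq period z uov = upsample (mbar m n) (emp_seq n (z ^ mbar m n) uv) \<longleftrightarrow>
      uov = upsample_spectrum (mbar m n) n uv"
    using upsample_emp_seq[OF mbar_pos n_pos, of z uv]
      emp_seq_inject[OF z uov upsample_spectrum_in_vecs[of "mbar m n" n uv, unfolded mbar_mult]]
    by (simp add: mbar_mult)
  have down: "emp_seq m (z ^ nbar m n) yv = downsample (nbar m n) (emp_seq period z yov) \<longleftrightarrow>
      yv = Pi_adj m 1 (nbar m n) yov"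
    using z by (simp add: downsample_emp_seq[OF m_pos nbar_pos] emp_seq_inject yv Pi_adj_in_vecs)
  show ?thesis
    unfolding multirate_eqs_def star_eqs_def Let_def upsample_spectrum_def[symmetric]
    using up down emp_state_equation_iff[OF period_pos z per_A per_B lin_A lin_B]
      emp_output_equation_iff[OF period_pos z yov per_C per_D lin_C lin_D]
    by (metis (no_types, lifting))
qed

lemma star_eqs_imp_multirate_eqs:
  assumes "z \<noteq> 0" and "uov \<in> vecs period" and "yov \<in> vecs period" and "yv \<in> vecs m"
    and "star_eqs m n A B C D z uv uov xv yov yv"
  shows "multirate_eqs m n A B C D (emp_seq n (z ^ mbar m n) uv) (emp_seq period z uov)
      (emp_seq period z xv) (emp_seq period z yov) (emp_seq m (z ^ nbar m n) yv) \<and>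
    emp_seq period z xv 0 = (\<Sum>k<period. xv k)"
  using assms by (simp add: multirate_eqs_emp_seq_iff_star_eqs emp_seq_at_0)

lemma EMP_multirate_eqs_imp_star_eqs:
  assumes z: "z \<noteq> 0" and eqs: "multirate_eqs m n A B C D u uo x yo y"
    and EMP: "is_EMP n (z ^ mbar m n) u" "is_EMP period z uo" "is_EMP period z x" "is_EMP period z yo"
  shows "is_EMP m (z ^ nbar m n) y \<and>
    star_eqs m n A B C D z (F_trans n (z ^ mbar m n) u) (F_trans period z uo) (F_trans period z x)
      (F_trans period z yo) (F_trans m (z ^ nbar m n) y)"
proof -
  define uv uov xv yov where "uv = F_trans n (z ^ mbar m n) u" and "uov = F_trans period z uo"
    and "xv = F_trans period z x" and "yov = F_trans period z yo"
  have u: "u = emp_seq n (z ^ mbar m n) uv" and uo: "uo = emp_seq period z uov"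
    and x: "x = emp_seq period z xv" and yo: "yo = emp_seq period z yov"
    using EMP z unfolding uv_def uov_def xv_def yov_def by (simp_all flip: is_EMP_iff)
  have y: "y = emp_seq m (z ^ nbar m n) (Pi_adj m 1 (nbar m n) yov)"
    using eqs unfolding multirate_eqs_def yo by (simp add: downsample_emp_seq[OF m_pos nbar_pos])
  then have "F_trans m (z ^ nbar m n) y = Pi_adj m 1 (nbar m n) yov"
    using z by (simp add: F_trans_emp_seq_vecs Pi_adj_in_vecs)
  then have "multirate_eqs m n A B C D (emp_seq n (z ^ mbar m n) uv) (emp_seq period z uov)
      (emp_seq period z xv) (emp_seq period z yov) (emp_seq m (z ^ nbar m n) (F_trans m (z ^ nbar m n) y))"
    using eqs y unfolding u uo x yo by simp
  then show ?thesis
    using y z unfolding uv_def uov_def xv_def yov_def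
    by (auto simp: is_EMP_def multirate_eqs_emp_seq_iff_star_eqs F_trans_in_vecs)
qed

lemma star_eqs_iff_solution:
  assumes z: "z \<in> rho period (toeplitz period A)" and xv: "xv \<in> vecs period"
  shows "star_eqs m n A B C D z uv uov xv yov yv \<longleftrightarrow>
    uov = upsample_spectrum (mbar m n) n uv \<and>
    xv = (\<lambda>k. z *\<^sub>C resolvent period A z (toeplitz period B uov) k) \<and>
    yov = (\<lambda>k. toeplitz period C xv k + toeplitz period D uov k) \<and>
    yv = Pi_adj m 1 (nbar m n) yov"
  unfolding star_eqs_def Let_def upsample_spectrum_def[symmetric]
  using state_equation_iff_resolvent[OF z xv toeplitz_in_vecs] by blast

lemma star_eqs_unique_solution:
  assumes z: "z \<in> rho period (toeplitz period A)"
  shows "\<exists>!(uov, xv, yov, yv). uov \<in> vecs period \<and> xv \<in> vecs period \<and>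
    yov \<in> vecs period \<and> yv \<in> vecs m \<and> star_eqs m n A B C D z uv uov xv yov yv"
proof -
  define uov where "uov = upsample_spectrum (mbar m n) n uv"
  define xv where "xv = (\<lambda>k. z *\<^sub>C resolvent period A z (toeplitz period B uov) k)"
  define yov where "yov = (\<lambda>k. toeplitz period C xv k + toeplitz period D uov k)"
  have "xv \<in> vecs period"
    unfolding xv_def by (intro vecs_scale resolvent_in_vecs[OF z] toeplitz_in_vecs)
  moreover have "uov \<in> vecs period" "yov \<in> vecs period"
    unfolding uov_def yov_def
    by (metis upsample_spectrum_in_vecs mbar_mult, intro vecs_add toeplitz_in_vecs)
  ultimately show ?thesis
    using star_eqs_iff_solution[OF z]
    by (intro ex1I[of _ "(uov, xv, yov, Pi_adj m 1 (nbar m n) yov)"])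
      (auto simp: Pi_adj_in_vecs uov_def xv_def yov_def)
qed

lemma star_eqs_output_eq_transfer:
  assumes z: "z \<in> rho period (toeplitz period A)" and xv: "xv \<in> vecs period"
    and "star_eqs m n A B C D z uv uov xv yov yv"
  shows "yv = transfer m n A B C D z uv"
  using assms(3)
  by (simp add: star_eqs_iff_solution[OF z xv] transfer_def Let_def resolvent_def
      upsample_spectrum_def toeplitz_scale[OF lin_C])

lemma EMP_run_state_eq:
  assumes z: "z \<noteq> 0" and z_rho: "z \<in> rho period (toeplitz period A)"
    and u: "is_EMP n (z ^ mbar m n) u"
    and EMP: "is_EMP period z (upsample (mbar m n) u)"
      "is_EMP period z (central_state A B (upsample (mbar m n) u) x0)"
      "is_EMP period z (central_output C D (central_state A B (upsample (mbar m n) u) x0)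
        (upsample (mbar m n) u))"
    and xv: "xv \<in> vecs period" and sol: "star_eqs m n A B C D z (F_trans n (z ^ mbar m n) u) uov xv yov yv"
  shows "central_state A B (upsample (mbar m n) u) x0 = emp_seq period z xv"
proof -
  let ?uo = "upsample (mbar m n) u"
  let ?x = "central_state A B ?uo x0"
  have "star_eqs m n A B C D z (F_trans n (z ^ mbar m n) u) (F_trans period z ?uo)
      (F_trans period z ?x) (F_trans period z (central_output C D ?x ?uo))
      (F_trans m (z ^ nbar m n) (downsample (nbar m n) (central_output C D ?x ?uo)))"
    using EMP_multirate_eqs_imp_star_eqs[OF z _ u EMP] by (simp add: multirate_eqs_iff_central)
  then have "F_trans period z ?x = xv"
    using sol by (simp add: star_eqs_iff_solution[OF z_rho F_trans_in_vecs]
        star_eqs_iff_solution[OF z_rho xv])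
  then show ?thesis
    using EMP(2) z by (metis is_EMP_iff)
qed

lemma EMP_initial_state_exists_unique:
  assumes z: "z \<noteq> 0" and z_rho: "z \<in> rho period (toeplitz period A)"
    and u: "is_EMP n (z ^ mbar m n) u"
  shows "\<exists>!x0. is_EMP period z (upsample (mbar m n) u) \<and>
    is_EMP period z (central_state A B (upsample (mbar m n) u) x0) \<and>
    is_EMP period z (central_output C D (central_state A B (upsample (mbar m n) u) x0)
      (upsample (mbar m n) u))"
    (is "\<exists>!x0. ?EMP x0")
proof -
  define uv where "uv = F_trans n (z ^ mbar m n) u"
  obtain uov xv yov yv where sol: "uov \<in> vecs period" "xv \<in> vecs period" "yov \<in> vecs period"
      "yv \<in> vecs m" "star_eqs m n A B C D z uv uov xv yov yv"
    using star_eqs_unique_solution[OF z_rho, of uv] by auto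
  have "u = emp_seq n (z ^ mbar m n) uv"
    unfolding uv_def using u z by (intro iffD1[OF is_EMP_iff]) simp_all
  then have "multirate_eqs m n A B C D u (emp_seq period z uov) (emp_seq period z xv)
      (emp_seq period z yov) (emp_seq m (z ^ nbar m n) yv)"
    using star_eqs_imp_multirate_eqs[OF z sol(1,3-5)] by simp
  then have uo: "emp_seq period z uov = upsample (mbar m n) u"
    and x: "emp_seq period z xv = central_state A B (emp_seq period z uov) (emp_seq period z xv 0)"
    and yo: "emp_seq period z yov = central_output C D (emp_seq period z xv) (emp_seq period z uov)"
    unfolding multirate_eqs_iff_central by blast+
  then have "?EMP (emp_seq period z xv 0)"
    unfolding uo[symmetric] x[symmetric] yo[symmetric] is_EMP_def by blast
  moreover have "x0 = emp_seq period z xv 0" if "?EMP x0" for x0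
    using EMP_run_state_eq[OF z z_rho u _ _ _ sol(2)] sol(5) that unfolding uv_def
    by (metis central_state.simps(1))
  ultimately show ?thesis by (rule ex1I)
qed

end

theorem theorem7:
  fixes m n :: nat
    and A :: "nat \<Rightarrow> 'x::sep_chilbert \<Rightarrow> 'x"
    and B :: "nat \<Rightarrow> 'u::sep_chilbert \<Rightarrow> 'x"
    and C :: "nat \<Rightarrow> 'x \<Rightarrow> 'y::sep_chilbert"
    and D :: "nat \<Rightarrow> 'u \<Rightarrow> 'y"
    and z :: complex
    and u :: "nat \<Rightarrow> 'u"
  assumes m_pos: "0 < m" and n_pos: "0 < n"
    and per_A: "\<forall>t. A (t + m * nbar m n) = A t"
    and per_B: "\<forall>t. B (t + m * nbar m n) = B t"
    and per_C: "\<forall>t. C (t + m * nbar m n) = C t"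
    and per_D: "\<forall>t. D (t + m * nbar m n) = D t"
    and bdd: "\<forall>t. bounded_clinear (A t) \<and> bounded_clinear (B t) \<and>
                   bounded_clinear (C t) \<and> bounded_clinear (D t)"
    and z_nz: "z \<noteq> 0"
    and z_rho: "z \<in> rho (m * nbar m n) (toeplitz (m * nbar m n) A)"
    and u_emp: "is_EMP n (z ^ mbar m n) u"
  shows
    "(\<exists>!x0. is_EMP (m * nbar m n) z (upsample (mbar m n) u) \<and>
            is_EMP (m * nbar m n) z (central_state A B (upsample (mbar m n) u) x0) \<and>
            is_EMP (m * nbar m n) z (central_output C D (central_state A B (upsample (mbar m n) u) x0)
                                      (upsample (mbar m n) u)))
     \<and>
     (\<forall>x0. is_EMP (m * nbar m n) z (upsample (mbar m n) u) \<and>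
            is_EMP (m * nbar m n) z (central_state A B (upsample (mbar m n) u) x0) \<and>
            is_EMP (m * nbar m n) z (central_output C D (central_state A B (upsample (mbar m n) u) x0)
                                      (upsample (mbar m n) u))
       \<longrightarrow> is_EMP m (z ^ nbar m n) (downsample (nbar m n)
              (central_output C D (central_state A B (upsample (mbar m n) u) x0) (upsample (mbar m n) u)))
         \<and> star_eqs m n A B C D z
              (F_trans n (z ^ mbar m n) u)
              (F_trans (m * nbar m n) z (upsample (mbar m n) u))
              (F_trans (m * nbar m n) z (central_state A B (upsample (mbar m n) u) x0))
              (F_trans (m * nbar m n) z (central_output C D (central_state A B (upsample (mbar m n) u) x0)
                                          (upsample (mbar m n) u)))
              (F_trans m (z ^ nbar m n) (downsample (nbar m n)
                 (central_output C D (central_state A B (upsample (mbar m n) u) x0) (upsample (mbar m n) u)))))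
     \<and>
     (\<forall>uv uov xv yov yv.
        uv \<in> vecs n \<and> uov \<in> vecs (m * nbar m n) \<and> xv \<in> vecs (m * nbar m n) \<and>
        yov \<in> vecs (m * nbar m n) \<and> yv \<in> vecs m \<and>
        star_eqs m n A B C D z uv uov xv yov yv
        \<longrightarrow> multirate_eqs m n A B C D
              (emp_seq n (z ^ mbar m n) uv) (emp_seq (m * nbar m n) z uov)
              (emp_seq (m * nbar m n) z xv) (emp_seq (m * nbar m n) z yov)
              (emp_seq m (z ^ nbar m n) yv)
            \<and> emp_seq (m * nbar m n) z xv 0 = (\<Sum>k < m * nbar m n. xv k))
     \<and>
     (\<forall>uv \<in> vecs n. \<exists>!(uov, xv, yov, yv).
        uov \<in> vecs (m * nbar m n) \<and> xv \<in> vecs (m * nbar m n) \<and>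
        yov \<in> vecs (m * nbar m n) \<and> yv \<in> vecs m \<and>
        star_eqs m n A B C D z uv uov xv yov yv)
     \<and>
     (\<forall>uv uov xv yov yv.
        uv \<in> vecs n \<and> uov \<in> vecs (m * nbar m n) \<and> xv \<in> vecs (m * nbar m n) \<and>
        yov \<in> vecs (m * nbar m n) \<and> yv \<in> vecs m \<and>
        star_eqs m n A B C D z uv uov xv yov yv
        \<longrightarrow> yv = transfer m n A B C D z uv)"
proof -
  interpret multirate_system m n A B C D
    using m_pos n_pos per_A per_B per_C per_D bdd
    by (simp add: multirate_system_def bounded_clinear_imp_module_hom)
  have central: "multirate_eqs m n A B C D u (upsample (mbar m n) u)
      (central_state A B (upsample (mbar m n) u) x0)
      (central_output C D (central_state A B (upsample (mbar m n) u) x0) (upsample (mbar m n) u))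
      (downsample (nbar m n)
        (central_output C D (central_state A B (upsample (mbar m n) u) x0) (upsample (mbar m n) u)))"
    for x0
    by (simp add: multirate_eqs_iff_central)
  show ?thesis
  proof (intro conjI, goal_cases)
    case 1
    show ?case by (rule EMP_initial_state_exists_unique[OF z_nz z_rho u_emp])
  next
    case 2
    show ?case using EMP_multirate_eqs_imp_star_eqs[OF z_nz central u_emp] by blast
  next
    case 3
    show ?case using star_eqs_imp_multirate_eqs[OF z_nz] by blast
  next
    case 4
    show ?case using star_eqs_unique_solution[OF z_rho] by blast
  next
    case 5
    show ?case using star_eqs_output_eq_transfer[OF z_rho] by blast
  qed
qed

end
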